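(* Consider $n$ users forming a clique with uniform weights, i.e., $\phi(x_i;x_{-i})=\frac1n\sum_{j=1}^n x_j$ for every $i$. Then for any dimension $\ell$, any features $x_1,\dots,x_n\in\mathbb{R}^\ell$, and any linear classifier $h(x_i;x_{-i})=\mathrm{sign}(\theta^\top\phi(x_i;x_{-i})+b)$, under the myopic best-response dynamics described below either (i) all $n$ users move in the first round, or (ii) none of the users move at all.
   Context: $\mathrm{sign}(0)=+1$. Cost $c(x,x')=\|x-x'\|_2$. Dynamics: $x_i^{(0)}=x_i$; at each round $t\ge1$ all users update concurrently; user $i$ changes her features only if she is currently classified $-1$ and some $x'$ with $h(x';x^{(t-1)}_{-i})=+1$ has $c(x_i^{(t-1)},x')\le2$, in which case she moves to the minimum-cost such point (embedding exactly on the boundary $\theta^\top\phi+b=0$); otherwise she stays. User $i$ "moves at round $t$" if $x_i^{(t)}\neq x_i^{(t-1)}$. *)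

theory Defs
  imports "HOL-Analysis.Analysis"
begin

text \<open>Sign convention: sign(0) = +1.\<close>
definition sgn0 :: "real \<Rightarrow> int" where
  "sgn0 r = (if r \<ge> 0 then 1 else -1)"

definition clique_phi :: "nat \<Rightarrow> (nat \<Rightarrow> 'a::real_vector) \<Rightarrow> nat \<Rightarrow> 'a" where
  "clique_phi n x i = (1 / real n) *\<^sub>R (\<Sum>j<n. x j)"

definition classify ::
  "'a::real_inner \<Rightarrow> real \<Rightarrow> ((nat \<Rightarrow> 'a) \<Rightarrow> nat \<Rightarrow> 'a) \<Rightarrow> (nat \<Rightarrow> 'a) \<Rightarrow> nat \<Rightarrow> int" where
  "classify theta b phi x i = sgn0 (theta \<bullet> phi x i + b)"

definition feasible_dev ::
  "'a::real_inner \<Rightarrow> real \<Rightarrow> ((nat \<Rightarrow> 'a) \<Rightarrow> nat \<Rightarrow> 'a) \<Rightarrow> (nat \<Rightarrow> 'a) \<Rightarrow> nat \<Rightarrow> 'a \<Rightarrow> bool" where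
  "feasible_dev theta b phi x i x' \<longleftrightarrow>
     classify theta b phi (x(i := x')) i = 1 \<and> norm (x i - x') \<le> 2"

definition best_response ::
  "'a::real_inner \<Rightarrow> real \<Rightarrow> ((nat \<Rightarrow> 'a) \<Rightarrow> nat \<Rightarrow> 'a) \<Rightarrow> (nat \<Rightarrow> 'a) \<Rightarrow> nat \<Rightarrow> 'a" where
  "best_response theta b phi x i =
     (if classify theta b phi x i = -1 \<and> (\<exists>x'. feasible_dev theta b phi x i x')
      then (SOME x'. feasible_dev theta b phi x i x' \<and>
                     (\<forall>y. feasible_dev theta b phi x i y \<longrightarrow> norm (x i - x') \<le> norm (x i - y)))
      else x i)"

primrec dynamics ::
  "'a::real_inner \<Rightarrow> real \<Rightarrow> ((nat \<Rightarrow> 'a) \<Rightarrow> nat \<Rightarrow> 'a) \<Rightarrow> (nat \<Rightarrow> 'a) \<Rightarrow> nat \<Rightarrow> nat \<Rightarrow> 'a" where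
  "dynamics theta b phi x0 0 = x0"
| "dynamics theta b phi x0 (Suc t) = (\<lambda>i. best_response theta b phi (dynamics theta b phi x0 t) i)"

end

theory Submission
  imports Defs
begin

text \<open>On the uniform clique every user has the same embedding, the mean of all features, so
  all users are classified alike. A deviation of user \<open>i\<close> moves the mean by \<open>(y - x i) / n\<close>,
  independently of \<open>i\<close>, so a feasible deviation of one user translates into a feasible
  deviation of the same cost for every other user. Hence if anybody can move in the first
  round, everybody does (the feasible set is closed, so a best response exists, and it is
  never the current position of a user classified \<open>-1\<close>); otherwise the initial profile is
  a fixed point of the dynamics.\<close>

lemma dynamics_fixed_point:
  assumes "\<And>i. best_response theta b phi x i = x i"
  shows "dynamics theta b phi x t = x"
  by (induction t) (simp_all add: assms)

lemma best_response_moved_imp: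
  assumes "best_response theta b phi x i \<noteq> x i"
  shows "classify theta b phi x i = -1 \<and> (\<exists>y. feasible_dev theta b phi x i y)"
  using assms by (auto simp: best_response_def split: if_split_asm)

lemma closed_feasible_devs:
  assumes "continuous_on UNIV (\<lambda>z. phi (x(i := z)) i)"
  shows "closed {z. feasible_dev theta b phi x i z}"
proof -
  have "{z. feasible_dev theta b phi x i z} =
      {z. 0 \<le> theta \<bullet> phi (x(i := z)) i + b} \<inter> cball (x i) 2"
    by (auto simp: feasible_dev_def classify_def sgn0_def dist_norm)
  moreover have "closed {z. 0 \<le> theta \<bullet> phi (x(i := z)) i + b}"
    using assms by (intro closed_Collect_le continuous_intros) auto
  ultimately show ?thesis by auto
qed

lemma best_response_moves:
  fixes x :: "nat \<Rightarrow> 'a::{real_inner, heine_borel}"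
  assumes cont: "continuous_on UNIV (\<lambda>z. phi (x(i := z)) i)"
    and neg: "classify theta b phi x i = -1"
    and feas: "feasible_dev theta b phi x i y"
  shows "best_response theta b phi x i \<noteq> x i"
proof -
  let ?F = "{z. feasible_dev theta b phi x i z}"
  let ?m = "closest_point ?F (x i)"
  have "?m \<in> ?F" and "\<forall>z\<in>?F. dist (x i) ?m \<le> dist (x i) z"
    using closest_point_exists[OF closed_feasible_devs[of phi x i theta b, OF cont]] feas by blast+
  then have "\<exists>z. feasible_dev theta b phi x i z \<and>
      (\<forall>w. feasible_dev theta b phi x i w \<longrightarrow> norm (x i - z) \<le> norm (x i - w))"
    by (auto simp: dist_norm)
  from someI_ex[OF this]
  have "feasible_dev theta b phi x i (best_response theta b phi x i)"
    using neg feas unfolding best_response_def by auto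
  moreover have "\<not> feasible_dev theta b phi x i (x i)"
    using neg by (simp add: feasible_dev_def)
  ultimately show ?thesis by metis
qed

lemma clique_phi_user_indep: "clique_phi n x i = clique_phi n x k"
  by (simp add: clique_phi_def)

lemma clique_phi_upd:
  assumes "i < n"
  shows "clique_phi n (x(i := y)) k = clique_phi n x k + (1 / real n) *\<^sub>R (y - x i)"
proof -
  have "(\<Sum>j<n. (x(i := y)) j) = y + (\<Sum>j\<in>{..<n} - {i}. x j)"
    using sum.remove[of "{..<n}" i "x(i := y)"] assms by simp
  moreover have "(\<Sum>j<n. x j) = x i + (\<Sum>j\<in>{..<n} - {i}. x j)"
    using sum.remove[of "{..<n}" i x] assms by simp
  ultimately show ?thesis
    by (simp add: clique_phi_def algebra_simps)
qed

lemma clique_phi_upd_outside: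
  assumes "\<not> i < n"
  shows "clique_phi n (x(i := y)) k = clique_phi n x k"
  using assms unfolding clique_phi_def by (metis fun_upd_other lessThan_iff sum.cong)

lemma continuous_on_clique_phi_upd:
  fixes x :: "nat \<Rightarrow> 'a::real_normed_vector"
  shows "continuous_on UNIV (\<lambda>z. clique_phi n (x(i := z)) i)"
  by (cases "i < n")
    (auto simp: clique_phi_upd clique_phi_upd_outside intro!: continuous_intros)

lemma classify_clique_phi_uniform:
  "classify theta b (clique_phi n) x i = classify theta b (clique_phi n) x j"
  by (simp add: classify_def clique_phi_user_indep[of n x i j])

lemma feasible_dev_clique_phi_translate:
  assumes "i < n" "j < n" "feasible_dev theta b (clique_phi n) x i y"
  shows "feasible_dev theta b (clique_phi n) x j (x j + (y - x i))"
  using assms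
  by (simp add: feasible_dev_def classify_def clique_phi_upd clique_phi_user_indep[of n x j i]
      norm_minus_commute)

lemma feasible_dev_clique_phi_outside:
  assumes "\<not> i < n" "classify theta b (clique_phi n) x i = -1"
  shows "\<not> feasible_dev theta b (clique_phi n) x i y"
  using assms by (simp add: feasible_dev_def classify_def clique_phi_upd_outside)

lemma clique_best_response_moves_all:
  fixes x :: "nat \<Rightarrow> 'a::{real_inner, heine_borel}"
  assumes "best_response theta b (clique_phi n) x i \<noteq> x i" and "j < n"
  shows "best_response theta b (clique_phi n) x j \<noteq> x j"
proof -
  obtain y where neg: "classify theta b (clique_phi n) x i = -1"
    and feas: "feasible_dev theta b (clique_phi n) x i y"
    using best_response_moved_imp[OF assms(1)] by blast
  have "i < n"
    using feasible_dev_clique_phi_outside neg feas by blast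
  show ?thesis
  proof (rule best_response_moves[OF continuous_on_clique_phi_upd])
    show "classify theta b (clique_phi n) x j = -1"
      using neg classify_clique_phi_uniform by metis
    show "feasible_dev theta b (clique_phi n) x j (x j + (y - x i))"
      using feasible_dev_clique_phi_translate[OF \<open>i < n\<close> \<open>j < n\<close> feas] .
  qed
qed

theorem proposition6:
  fixes theta :: "real ^ 'l" and b :: real and x :: "nat \<Rightarrow> real ^ 'l" and n :: nat
  shows "(\<forall>i<n. dynamics theta b (clique_phi n) x 1 i \<noteq> dynamics theta b (clique_phi n) x 0 i)
       \<or> (\<forall>t. \<forall>i<n. dynamics theta b (clique_phi n) x (Suc t) i = dynamics theta b (clique_phi n) x t i)"
proof (cases "\<forall>i. best_response theta b (clique_phi n) x i = x i")
  case True
  then have fixed: "dynamics theta b (clique_phi n) x t = x" for t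
    by (intro dynamics_fixed_point) blast
  show ?thesis unfolding fixed by simp
next
  case False
  then obtain i where "best_response theta b (clique_phi n) x i \<noteq> x i" by blast
  then have "\<forall>j<n. best_response theta b (clique_phi n) x j \<noteq> x j"
    using clique_best_response_moves_all by blast
  then show ?thesis by simp
qed

end
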